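(* Assume $\ell=d$ and that $B_1,B_2,R_1,R_2$ (and $B_1+\bar B_1,B_2+\bar B_2,R_1+\bar R_1,R_2+\bar R_2$) are invertible. Let $P^c\in\mathcal S^d$ be a solution to $0=\mathcal M(P^c)-\mathcal L(P^c)\mathcal N(P^c)^{-1}\mathcal L(P^c)^\top$. If $P^c$ and $(P^c)^{-1}+\gamma B_1R_1^{-1}B_1^\top-\gamma B_2R_2^{-1}B_2^\top$ are invertible, then $$\mathcal M(P^c)-\mathcal L(P^c)\mathcal N(P^c)^{-1}\mathcal L(P^c)^\top=Q-P^c+A^\top\Big(\frac1\gamma(P^c)^{-1}+B_1R_1^{-1}B_1^\top-B_2R_2^{-1}B_2^\top\Big)^{-1}A.$$
   Context: $\mathcal S^d$: symmetric $d\times d$ matrices. Fix $d\ge1$, $\gamma\in(0,1)$, $A,\bar A\in\mathbb R^{d\times d}$, $B_1,\bar B_1,B_2,\bar B_2\in\mathbb R^{d\times d}$, $Q\in\mathcal S^d$, symmetric $R_1,\bar R_1,R_2,\bar R_2\in\mathbb R^{d\times d}$. For $P\in\mathcal S^d$: $\mathcal M(P)=\gamma A^\top PA-P+Q$, $\mathcal L_i(P)=\gamma A^\top PB_i$, $\mathcal L_{12}(P)=\gamma B_1^\top PB_2$, $\mathcal N_1(P)=\gamma B_1^\top PB_1+R_1$, $\mathcal N_2(P)=\gamma B_2^\top PB_2-R_2$, $\mathcal L(P)=[\mathcal L_1(P),\mathcal L_2(P)]$, $\mathcal N(P)=\begin{bmatrix}\mathcal N_1(P)&\mathcal L_{12}(P)\\\mathcal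 L_{12}(P)^\top&\mathcal N_2(P)\end{bmatrix}$ (a solution of the equation is required to have $\mathcal N(P^c)$ invertible). *)

theory Defs
  imports "HOL-Analysis.Analysis"
begin

type_synonym 'n mat = "real^'n^'n"

definition Mop :: "real \<Rightarrow> 'n::finite mat \<Rightarrow> 'n mat \<Rightarrow> 'n mat \<Rightarrow> 'n mat" where
  "Mop \<gamma> A Q P = \<gamma> *\<^sub>R (transpose A ** P ** A) - P + Q"

definition Lop_i :: "real \<Rightarrow> 'n::finite mat \<Rightarrow> 'n mat \<Rightarrow> 'n mat \<Rightarrow> 'n mat" where
  "Lop_i \<gamma> A Bi P = \<gamma> *\<^sub>R (transpose A ** P ** Bi)"

definition Lop12 :: "real \<Rightarrow> 'n::finite mat \<Rightarrow> 'n mat \<Rightarrow> 'n mat \<Rightarrow> 'n mat" where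
  "Lop12 \<gamma> B1 B2 P = \<gamma> *\<^sub>R (transpose B1 ** P ** B2)"

definition Nop1 :: "real \<Rightarrow> 'n::finite mat \<Rightarrow> 'n mat \<Rightarrow> 'n mat \<Rightarrow> 'n mat" where
  "Nop1 \<gamma> B1 R1 P = \<gamma> *\<^sub>R (transpose B1 ** P ** B1) + R1"

definition Nop2 :: "real \<Rightarrow> 'n::finite mat \<Rightarrow> 'n mat \<Rightarrow> 'n mat \<Rightarrow> 'n mat" where
  "Nop2 \<gamma> B2 R2 P = \<gamma> *\<^sub>R (transpose B2 ** P ** B2) - R2"

text \<open>The d x 2d block row L(P) = [L1(P), L2(P)]; the 2d index set is 'n + 'n
  (Inl = first block, Inr = second block).\<close>
definition Lop :: "real \<Rightarrow> 'n::finite mat \<Rightarrow> 'n mat \<Rightarrow> 'n mat \<Rightarrow> 'n mat \<Rightarrow> real^('n+'n)^'n" where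
  "Lop \<gamma> A B1 B2 P = (\<chi> i j. case j of Inl b \<Rightarrow> Lop_i \<gamma> A B1 P $ i $ b
                                   | Inr b \<Rightarrow> Lop_i \<gamma> A B2 P $ i $ b)"

definition Nop :: "real \<Rightarrow> 'n::finite mat \<Rightarrow> 'n mat \<Rightarrow> 'n mat \<Rightarrow> 'n mat \<Rightarrow> 'n mat \<Rightarrow> real^('n+'n)^('n+'n)" where
  "Nop \<gamma> B1 B2 R1 R2 P = (\<chi> i j. case i of
       Inl a \<Rightarrow> (case j of Inl b \<Rightarrow> Nop1 \<gamma> B1 R1 P $ a $ b | Inr b \<Rightarrow> Lop12 \<gamma> B1 B2 P $ a $ b)
     | Inr a \<Rightarrow> (case j of Inl b \<Rightarrow> transpose (Lop12 \<gamma> B1 B2 P) $ a $ b | Inr b \<Rightarrow> Nop2 \<gamma> B2 R2 P $ a $ b))"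

definition Ric :: "real \<Rightarrow> 'n::finite mat \<Rightarrow> 'n mat \<Rightarrow> 'n mat \<Rightarrow> 'n mat \<Rightarrow> 'n mat \<Rightarrow> 'n mat \<Rightarrow> 'n mat \<Rightarrow> 'n mat" where
  "Ric \<gamma> A B1 B2 Q R1 R2 P = Mop \<gamma> A Q P
      - Lop \<gamma> A B1 B2 P ** matrix_inv (Nop \<gamma> B1 B2 R1 R2 P) ** transpose (Lop \<gamma> A B1 B2 P)"

end

theory Submission
  imports Defs
begin

text \<open>With \<open>B = [B1 B2]\<close> and \<open>R = diag(R1, -R2)\<close> one has \<open>N(P) = R + B\<^sup>T (\<gamma>P) B\<close> and
  \<open>L(P) = A\<^sup>T (\<gamma>P) B\<close>, so the Riccati expression equals
  \<open>Q - P + A\<^sup>T (\<gamma>P - \<gamma>P B N(P)\<^sup>-\<^sup>1 B\<^sup>T \<gamma>P) A\<close>. By the Woodbury identity the middle factor is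
  the inverse of \<open>(\<gamma>P)\<^sup>-\<^sup>1 + B R\<^sup>-\<^sup>1 B\<^sup>T = (1/\<gamma>) P\<^sup>-\<^sup>1 + B1 R1\<^sup>-\<^sup>1 B1\<^sup>T - B2 R2\<^sup>-\<^sup>1 B2\<^sup>T\<close>.\<close>

lemma matrix_add_rdistrib: "((A::'a::semiring_1^'n^'m) + B) ** C = A ** C + B ** C"
  by (simp add: vec_eq_iff matrix_matrix_mult_def sum.distrib algebra_simps)

lemma matrix_diff_ldistrib: "(A::'a::ring_1^'n^'m) ** (B - C) = A ** B - A ** C"
  by (simp add: vec_eq_iff matrix_matrix_mult_def sum_subtractf algebra_simps)

lemma matrix_diff_rdistrib: "((A::'a::ring_1^'n^'m) - B) ** C = A ** C - B ** C"
  by (simp add: vec_eq_iff matrix_matrix_mult_def sum_subtractf algebra_simps)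

lemma matrix_neg_left: "(- (A::'a::ring_1^'n^'m)) ** B = - (A ** B)"
  by (simp add: vec_eq_iff matrix_matrix_mult_def sum_negf)

lemma matrix_neg_right: "(A::'a::ring_1^'n^'m) ** (- B) = - (A ** B)"
  by (simp add: vec_eq_iff matrix_matrix_mult_def sum_negf)

lemma matrix_scaleR_left: "(c *\<^sub>R (A::'a::real_algebra_1^'n^'m)) ** B = c *\<^sub>R (A ** B)"
  by (simp add: scalar_matrix_assoc)

lemma matrix_scaleR_right: "(A::'a::real_algebra_1^'n^'m) ** (c *\<^sub>R B) = c *\<^sub>R (A ** B)"
  by (simp add: matrix_scalar_ac scalar_matrix_assoc)

lemma matrix_inv_left: "invertible A \<Longrightarrow> matrix_inv A ** A = mat 1"
  unfolding invertible_def matrix_inv_def by (rule someI2_ex) auto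

lemma matrix_inv_right: "invertible A \<Longrightarrow> A ** matrix_inv A = mat 1"
  unfolding invertible_def matrix_inv_def by (rule someI2_ex) auto

lemma matrix_inv_unique:
  fixes A X :: "'a::field^'n^'n"
  assumes "A ** X = mat 1"
  shows "matrix_inv A = X"
proof -
  have "invertible A"
    using assms invertible_right_inverse by blast
  have "matrix_inv A = matrix_inv A ** (A ** X)"
    by (simp add: assms)
  also have "\<dots> = (matrix_inv A ** A) ** X"
    by (simp add: matrix_mul_assoc)
  also have "\<dots> = X"
    by (simp add: \<open>invertible A\<close> matrix_inv_left)
  finally show ?thesis .
qed

lemma matrix_inv_scaleR:
  fixes A :: "real^'n^'n"
  assumes "c \<noteq> 0" "invertible A"
  shows "matrix_inv (c *\<^sub>R A) = inverse c *\<^sub>R matrix_inv A"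
  using assms by (intro matrix_inv_unique)
    (simp add: matrix_scaleR_left matrix_scaleR_right matrix_inv_right)

lemma matrix_inv_diff:
  fixes A B :: "'a::field^'n^'n"
  assumes "invertible A" "invertible B"
  shows "matrix_inv A ** (B - A) ** matrix_inv B = matrix_inv A - matrix_inv B"
proof -
  have "matrix_inv A ** (B - A) ** matrix_inv B
      = matrix_inv A ** (B ** matrix_inv B) - (matrix_inv A ** A) ** matrix_inv B"
    by (simp only: matrix_diff_ldistrib matrix_diff_rdistrib matrix_mul_assoc)
  then show ?thesis
    using assms by (simp add: matrix_inv_left matrix_inv_right)
qed

theorem matrix_inv_woodbury:
  fixes P :: "'a::field^'n^'n" and B :: "'a^'m^'n" and C :: "'a^'n^'m" and R :: "'a^'m^'m"
  defines "N \<equiv> R + C ** P ** B"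
  assumes P: "invertible P" and R: "invertible R" and N: "invertible N"
  shows "matrix_inv (matrix_inv P + B ** matrix_inv R ** C)
           = P - P ** B ** matrix_inv N ** C ** P"
proof (rule matrix_inv_unique)
  let ?X = "P - P ** B ** matrix_inv N ** C ** P"
  have key: "matrix_inv R ** (C ** P ** B) ** matrix_inv N = matrix_inv R - matrix_inv N"
    using matrix_inv_diff[OF R N] by (simp add: N_def)
  have "B ** matrix_inv R ** C ** (P ** B ** matrix_inv N ** C ** P)
      = B ** (matrix_inv R ** (C ** P ** B) ** matrix_inv N) ** C ** P"
    by (simp only: matrix_mul_assoc)
  also have "\<dots> = B ** (matrix_inv R - matrix_inv N) ** C ** P"
    by (simp only: key)
  also have "\<dots> = B ** matrix_inv R ** C ** P - B ** matrix_inv N ** C ** P"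
    by (simp only: matrix_diff_ldistrib matrix_diff_rdistrib)
  finally have resolvent: "B ** matrix_inv R ** C ** (P ** B ** matrix_inv N ** C ** P)
      = B ** matrix_inv R ** C ** P - B ** matrix_inv N ** C ** P" .
  have "matrix_inv P ** ?X = mat 1 - B ** matrix_inv N ** C ** P"
    using P by (simp add: matrix_diff_ldistrib matrix_mul_assoc matrix_inv_left)
  moreover have "B ** matrix_inv R ** C ** ?X = B ** matrix_inv N ** C ** P"
    by (simp add: matrix_diff_ldistrib resolvent)
  ultimately show "(matrix_inv P + B ** matrix_inv R ** C) ** ?X = mat 1"
    by (simp add: matrix_add_rdistrib)
qed

lemma sum_UNIV_Plus:
  "(\<Sum>k\<in>(UNIV::('a::finite + 'b::finite) set). f k) = (\<Sum>k\<in>UNIV. f (Inl k)) + (\<Sum>k\<in>UNIV. f (Inr k))"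
  by (subst UNIV_Plus_UNIV[symmetric], subst sum.Plus) (auto simp: o_def)

definition block_row :: "'a^'n^'m \<Rightarrow> 'a^'p^'m \<Rightarrow> 'a^('n + 'p)^'m" where
  "block_row X Y = (\<chi> i j. case j of Inl b \<Rightarrow> X $ i $ b | Inr b \<Rightarrow> Y $ i $ b)"

definition block_col :: "'a^'n^'m \<Rightarrow> 'a^'n^'q \<Rightarrow> 'a^'n^('m + 'q)" where
  "block_col X Y = (\<chi> i j. case i of Inl a \<Rightarrow> X $ a $ j | Inr a \<Rightarrow> Y $ a $ j)"

definition block_mat ::
  "'a^'n^'m \<Rightarrow> 'a^'p^'m \<Rightarrow> 'a^'n^'q \<Rightarrow> 'a^'p^'q \<Rightarrow> 'a^('n + 'p)^('m + 'q)" where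
  "block_mat X Y U V = (\<chi> i j. case i of
      Inl a \<Rightarrow> (case j of Inl b \<Rightarrow> X $ a $ b | Inr b \<Rightarrow> Y $ a $ b)
    | Inr a \<Rightarrow> (case j of Inl b \<Rightarrow> U $ a $ b | Inr b \<Rightarrow> V $ a $ b))"

lemma transpose_block_row: "transpose (block_row X Y) = block_col (transpose X) (transpose Y)"
  by (simp add: vec_eq_iff block_row_def block_col_def transpose_def split: sum.split)

lemma block_row_mult_block_col:
  "block_row X Y ** block_col U V = X ** U + Y ** V"
  by (simp add: vec_eq_iff block_row_def block_col_def matrix_matrix_mult_def sum_UNIV_Plus)

lemma block_col_mult_block_row:
  "block_col X Y ** block_row U V = block_mat (X ** U) (X ** V) (Y ** U) (Y ** V)"
  by (simp add: vec_eq_iff block_row_def block_col_def block_mat_def matrix_matrix_mult_def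
      split: sum.split)

lemma matrix_mult_block_row: "M ** block_row X Y = block_row (M ** X) (M ** Y)"
  by (simp add: vec_eq_iff block_row_def matrix_matrix_mult_def split: sum.split)

lemma block_col_mult: "block_col X Y ** M = block_col (X ** M) (Y ** M)"
  by (simp add: vec_eq_iff block_col_def matrix_matrix_mult_def split: sum.split)

lemma block_row_mult_block_mat:
  "block_row X Y ** block_mat E F G H = block_row (X ** E + Y ** G) (X ** F + Y ** H)"
  by (simp add: vec_eq_iff block_row_def block_mat_def matrix_matrix_mult_def sum_UNIV_Plus
      split: sum.split)

lemma block_mat_mult_block_mat:
  "block_mat X Y U V ** block_mat E F G H
     = block_mat (X ** E + Y ** G) (X ** F + Y ** H) (U ** E + V ** G) (U ** F + V ** H)"
  by (simp add: vec_eq_iff block_mat_def matrix_matrix_mult_def sum_UNIV_Plus split: sum.split)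

lemma mat_1_eq_block_mat:
  "(mat 1 :: 'a::zero_neq_one^('n::finite + 'p::finite)^('n + 'p)) = block_mat (mat 1) 0 0 (mat 1)"
  by (simp add: vec_eq_iff block_mat_def mat_def split: sum.split)

lemma scaleR_block_mat:
  "c *\<^sub>R block_mat X Y U V = block_mat (c *\<^sub>R X) (c *\<^sub>R Y) (c *\<^sub>R U) (c *\<^sub>R V)"
  by (simp add: vec_eq_iff block_mat_def split: sum.split)

lemma block_mat_add:
  "block_mat X Y U V + block_mat E F G H = block_mat (X + E) (Y + F) (U + G) (V + H)"
  by (simp add: vec_eq_iff block_mat_def split: sum.split)

lemma block_diag_right_inverse:
  fixes X X' :: "'a::semiring_1^'n^'n" and Y Y' :: "'a^'p^'p"
  assumes "X ** X' = mat 1" "Y ** Y' = mat 1"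
  shows "block_mat X 0 0 Y ** block_mat X' 0 0 Y' = mat 1"
  using assms by (simp add: block_mat_mult_block_mat flip: mat_1_eq_block_mat)

lemma Lop_eq_block_row:
  "Lop \<gamma> A B1 B2 P = transpose A ** (\<gamma> *\<^sub>R P) ** block_row B1 B2"
proof -
  have "Lop \<gamma> A B1 B2 P = block_row (Lop_i \<gamma> A B1 P) (Lop_i \<gamma> A B2 P)"
    by (simp add: Lop_def block_row_def)
  then show ?thesis
    by (simp add: Lop_i_def matrix_mult_block_row matrix_scaleR_left matrix_scaleR_right)
qed

lemma Nop_eq_block_row:
  assumes P_sym: "transpose P = P"
  shows "Nop \<gamma> B1 B2 R1 R2 P = block_mat R1 0 0 (- R2)
           + transpose (block_row B1 B2) ** (\<gamma> *\<^sub>R P) ** block_row B1 B2"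
proof -
  have Lop12_transpose: "transpose (Lop12 \<gamma> B1 B2 P) = \<gamma> *\<^sub>R (transpose B2 ** P ** B1)"
    by (simp add: Lop12_def transpose_scalar matrix_transpose_mul P_sym matrix_mul_assoc)
  have BtPB: "transpose (block_row B1 B2) ** P ** block_row B1 B2
      = block_mat (transpose B1 ** P ** B1) (transpose B1 ** P ** B2)
          (transpose B2 ** P ** B1) (transpose B2 ** P ** B2)"
    unfolding transpose_block_row block_col_mult[of _ _ P] block_col_mult_block_row ..
  have "Nop \<gamma> B1 B2 R1 R2 P = block_mat (Nop1 \<gamma> B1 R1 P) (Lop12 \<gamma> B1 B2 P)
      (transpose (Lop12 \<gamma> B1 B2 P)) (Nop2 \<gamma> B2 R2 P)"
    by (simp add: Nop_def block_mat_def)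
  also have "\<dots> = block_mat R1 0 0 (- R2)
      + \<gamma> *\<^sub>R (transpose (block_row B1 B2) ** P ** block_row B1 B2)"
    unfolding Lop12_transpose BtPB
    by (simp add: scaleR_block_mat block_mat_add Nop1_def Nop2_def Lop12_def algebra_simps)
  finally show ?thesis
    by (simp add: matrix_scaleR_left matrix_scaleR_right)
qed

theorem mainTheorem14:
  fixes \<gamma> :: real
    and A Abar B1 B1bar B2 B2bar Q R1 R1bar R2 R2bar P :: "real^'n^'n"
  assumes "0 < \<gamma>" "\<gamma> < 1"
    and "transpose Q = Q"
    and "transpose R1 = R1" "transpose R1bar = R1bar"
    and "transpose R2 = R2" "transpose R2bar = R2bar"
    and "invertible B1" "invertible B2" "invertible R1" "invertible R2"
    and "invertible (B1 + B1bar)" "invertible (B2 + B2bar)"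
    and "invertible (R1 + R1bar)" "invertible (R2 + R2bar)"
    and "transpose P = P"
    and "invertible (Nop \<gamma> B1 B2 R1 R2 P)"
    and "Ric \<gamma> A B1 B2 Q R1 R2 P = 0"
    and "invertible P"
    and "invertible (matrix_inv P + \<gamma> *\<^sub>R (B1 ** matrix_inv R1 ** transpose B1)
                      - \<gamma> *\<^sub>R (B2 ** matrix_inv R2 ** transpose B2))"
  shows "Ric \<gamma> A B1 B2 Q R1 R2 P =
           Q - P + transpose A ** matrix_inv ((1 / \<gamma>) *\<^sub>R matrix_inv P
              + B1 ** matrix_inv R1 ** transpose B1 - B2 ** matrix_inv R2 ** transpose B2) ** A"
proof -
  define B where "B = block_row B1 B2"
  define R where "R = block_mat R1 0 0 (- R2)"
  define Ri where "Ri = block_mat (matrix_inv R1) 0 0 (- matrix_inv R2)"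
  define N where "N = Nop \<gamma> B1 B2 R1 R2 P"
  have "R ** Ri = mat 1"
    unfolding R_def Ri_def using assms(10,11)
    by (intro block_diag_right_inverse) (simp_all add: matrix_inv_right matrix_neg_left matrix_neg_right)
  then have "invertible R" "matrix_inv R = Ri"
    using invertible_right_inverse matrix_inv_unique by blast+
  moreover have "B ** Ri ** transpose B
      = B1 ** matrix_inv R1 ** transpose B1 - B2 ** matrix_inv R2 ** transpose B2"
    unfolding B_def Ri_def transpose_block_row
    by (simp add: block_row_mult_block_mat block_row_mult_block_col matrix_neg_left matrix_neg_right)
  moreover have "matrix_inv (\<gamma> *\<^sub>R P) = (1 / \<gamma>) *\<^sub>R matrix_inv P"
    using assms(1,19) by (simp add: matrix_inv_scaleR inverse_eq_divide)
  moreover have "N = R + transpose B ** (\<gamma> *\<^sub>R P) ** B" "invertible N"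
    using Nop_eq_block_row[OF assms(16)] assms(17) by (simp_all add: N_def B_def R_def)
  ultimately have woodbury: "matrix_inv ((1 / \<gamma>) *\<^sub>R matrix_inv P
        + B1 ** matrix_inv R1 ** transpose B1 - B2 ** matrix_inv R2 ** transpose B2)
      = \<gamma> *\<^sub>R P - (\<gamma> *\<^sub>R P) ** B ** matrix_inv N ** transpose B ** (\<gamma> *\<^sub>R P)"
    using matrix_inv_woodbury[of "\<gamma> *\<^sub>R P" R "transpose B" B] assms(1,19)
    by (simp add: scalar_invertible add_diff_eq)
  show ?thesis
    unfolding Ric_def Mop_def woodbury N_def[symmetric] Lop_eq_block_row B_def[symmetric]
    using assms(16)
    by (simp add: matrix_transpose_mul transpose_scalar matrix_diff_ldistrib matrix_diff_rdistrib
        matrix_scaleR_left matrix_scaleR_right matrix_mul_assoc)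
qed

end
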